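(* Let $\mathcal{M}_{EL}=(W,(R_i)_{i\in\mathbf{A}},V)$ be an EL model and let $\mathcal{M}^\alpha_{AK}$ be its induced AK model. Then for every world $w\in W$, every EL formula $\varphi$ and every $i\in\mathbf{A}$: $\mathcal{M}_{EL},w\models\varphi$ if and only if $\mathcal{M}^\alpha_{AK},(i,w)\models T(\varphi)$.
   Context: Epistemic logic: disjoint sets $\mathbf{Prop}$, $\mathbf{A}$; formulas $\varphi ::= p \mid \neg\varphi \mid \varphi\land\varphi \mid K_i\varphi$; EL models $(W,(R_i)_{i\in\mathbf{A}},V)$ with $W\neq\emptyset$, $R_i\subseteq W\times W$, $V:\mathbf{Prop}\to\mathcal{P}(W)$; $w\models p$ iff $w\in V(p)$, Booleans as usual, $w\models K_i\varphi$ iff $v\models\varphi$ for all $v$ with $wR_iv$. Agent-knowledge logic: pairwise disjoint sets $\mathbf{Prop}_A,\mathbf{Prop}_K,\mathbf{Nom}_A,\mathbf{Nom}_K$; formulas $\varphi ::= p_A \mid p_K \mid a \mid k \mid \neg\varphi \mid \varphi\land\varphi \mid \Box_A\varphi \mid \Box_K\varphi \mid @_a\varphi \mid @_k\varphi$. AK models $(W_A, W_K, (R_y)_{y \in W_K}, (S_x)_{x \in W_A}, V)$: $W_A,W_K$ non-empty, $R_y\subseteq W_A\times W_A$, $S_x\subseteq W_K\times W_K$, $V$ sends $\mathbf{Prop}_A\cup\mathbf{Nom}_A$ to subsets of $W_A$ and $\mathbf{Prop}_K\cup\mathbf{Nom}_K$ to subsets of $W_K$, with $V(a)=\{a^V\}$,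 $V(k)=\{k^V\}$ singletons for nominals. Satisfaction at $(x,y)$: $p_A$ iff $x\in V(p_A)$; $p_K$ iff $y\in V(p_K)$; $a$ iff $x=a^V$; $k$ iff $y=k^V$; Booleans as usual; $\Box_A\varphi$ iff $(x',y)\models\varphi$ for all $x'$ with $xR_yx'$; $\Box_K\varphi$ iff $(x,y')\models\varphi$ for all $y'$ with $yS_xy'$; $@_a\varphi$ iff $(a^V,y)\models\varphi$; $@_k\varphi$ iff $(x,k^V)\models\varphi$. Translation $T$: bijections $\mathbf{Prop}\to\mathbf{Prop}_K$ and $\mathbf{A}\to\mathbf{Nom}_A$, $T(\neg\varphi)=\neg T(\varphi)$, $T(\varphi\land\psi)=T(\varphi)\land T(\psi)$, $T(K_i\varphi)=@_{T(i)}\Box_KT(\varphi)$. Induced AK model: given the EL model, fix some $y_0\in W$; $\mathcal{M}^\alpha_{AK}=(W_A,W_K,(R'_y)_{y\in W_K},(S_x)_{x\in W_A},V^\alpha)$ with $W_A=\mathbf{A}$, $W_K=W$, $R'_y=\emptyset$ for all $y$, $S_i=R_i$ for each $i\in\mathbf{A}$, $V^\alpha(p_A)=\emptyset$ for $p_A\in\mathbf{Prop}_A$, $V^\alpha(p_K)=V(T^{-1}(p_K))$ for $p_K\in\mathbf{Prop}_K$, $V^\alpha(a)=\{T^{-1}(a)\}$ for $a\in\mathbf{Nom}_A$, and $V^\alpha(k)=\{y_0\}$ for $k\in\mathbf{Nom}_K$. *)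

theory Defs
  imports Main
begin

datatype ('p, 'i) el_form =
    EProp 'p
  | ENot "('p, 'i) el_form"
  | EAnd "('p, 'i) el_form" "('p, 'i) el_form"
  | EK 'i "('p, 'i) el_form"

record ('w, 'i, 'p) el_model =
  ElW :: "'w set"
  ElR :: "'i \<Rightarrow> ('w \<times> 'w) set"
  ElV :: "'p \<Rightarrow> 'w set"

definition el_model :: "('w, 'i, 'p) el_model \<Rightarrow> bool" where
  "el_model M \<longleftrightarrow> ElW M \<noteq> {} \<and> (\<forall>i. ElR M i \<subseteq> ElW M \<times> ElW M)
     \<and> (\<forall>p. ElV M p \<subseteq> ElW M)"

fun el_sat :: "('w, 'i, 'p) el_model \<Rightarrow> 'w \<Rightarrow> ('p, 'i) el_form \<Rightarrow> bool" where
  "el_sat M w (EProp p) \<longleftrightarrow> w \<in> ElV M p"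
| "el_sat M w (ENot \<phi>) \<longleftrightarrow> \<not> el_sat M w \<phi>"
| "el_sat M w (EAnd \<phi> \<psi>) \<longleftrightarrow> el_sat M w \<phi> \<and> el_sat M w \<psi>"
| "el_sat M w (EK i \<phi>) \<longleftrightarrow> (\<forall>v. (w, v) \<in> ElR M i \<longrightarrow> el_sat M v \<phi>)"

datatype ('pa, 'pk, 'na, 'nk) ak_form =
    APropA 'pa
  | APropK 'pk
  | ANomA 'na
  | ANomK 'nk
  | ANot "('pa, 'pk, 'na, 'nk) ak_form"
  | AAnd "('pa, 'pk, 'na, 'nk) ak_form" "('pa, 'pk, 'na, 'nk) ak_form"
  | ABoxA "('pa, 'pk, 'na, 'nk) ak_form"
  | ABoxK "('pa, 'pk, 'na, 'nk) ak_form"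
  | AAtA 'na "('pa, 'pk, 'na, 'nk) ak_form"
  | AAtK 'nk "('pa, 'pk, 'na, 'nk) ak_form"

text \<open>AK model. Nominals are valued by singletons; we record the unique element:
  V(a) = {AkNomA M a}, V(k) = {AkNomK M k}.\<close>
record ('x, 'y, 'pa, 'pk, 'na, 'nk) ak_model =
  AkWA :: "'x set"
  AkWK :: "'y set"
  AkR :: "'y \<Rightarrow> ('x \<times> 'x) set"
  AkS :: "'x \<Rightarrow> ('y \<times> 'y) set"
  AkVA :: "'pa \<Rightarrow> 'x set"
  AkVK :: "'pk \<Rightarrow> 'y set"
  AkNomA :: "'na \<Rightarrow> 'x"
  AkNomK :: "'nk \<Rightarrow> 'y"

fun ak_sat :: "('x, 'y, 'pa, 'pk, 'na, 'nk) ak_model \<Rightarrow> 'x \<Rightarrow> 'y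
                 \<Rightarrow> ('pa, 'pk, 'na, 'nk) ak_form \<Rightarrow> bool" where
  "ak_sat M x y (APropA p) \<longleftrightarrow> x \<in> AkVA M p"
| "ak_sat M x y (APropK p) \<longleftrightarrow> y \<in> AkVK M p"
| "ak_sat M x y (ANomA a) \<longleftrightarrow> x = AkNomA M a"
| "ak_sat M x y (ANomK k) \<longleftrightarrow> y = AkNomK M k"
| "ak_sat M x y (ANot \<phi>) \<longleftrightarrow> \<not> ak_sat M x y \<phi>"
| "ak_sat M x y (AAnd \<phi> \<psi>) \<longleftrightarrow> ak_sat M x y \<phi> \<and> ak_sat M x y \<psi>"
| "ak_sat M x y (ABoxA \<phi>) \<longleftrightarrow> (\<forall>x'. (x, x') \<in> AkR M y \<longrightarrow> ak_sat M x' y \<phi>)"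
| "ak_sat M x y (ABoxK \<phi>) \<longleftrightarrow> (\<forall>y'. (y, y') \<in> AkS M x \<longrightarrow> ak_sat M x y' \<phi>)"
| "ak_sat M x y (AAtA a \<phi>) \<longleftrightarrow> ak_sat M (AkNomA M a) y \<phi>"
| "ak_sat M x y (AAtK k \<phi>) \<longleftrightarrow> ak_sat M x (AkNomK M k) \<phi>"

text \<open>tp : Prop \<rightarrow> Prop_K and ta : A \<rightarrow> Nom_A are the fixed bijections.\<close>
fun transl :: "('p \<Rightarrow> 'pk) \<Rightarrow> ('i \<Rightarrow> 'na) \<Rightarrow> ('p, 'i) el_form \<Rightarrow> ('pa, 'pk, 'na, 'nk) ak_form" where
  "transl tp ta (EProp p) = APropK (tp p)"
| "transl tp ta (ENot \<phi>) = ANot (transl tp ta \<phi>)"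
| "transl tp ta (EAnd \<phi> \<psi>) = AAnd (transl tp ta \<phi>) (transl tp ta \<psi>)"
| "transl tp ta (EK i \<phi>) = AAtA (ta i) (ABoxK (transl tp ta \<phi>))"

text \<open>Induced AK model; the set of agents is the whole type 'i.\<close>
definition induced_ak :: "('w, 'i, 'p) el_model \<Rightarrow> ('p \<Rightarrow> 'pk) \<Rightarrow> ('i \<Rightarrow> 'na) \<Rightarrow> 'w
     \<Rightarrow> ('i, 'w, 'pa, 'pk, 'na, 'nk) ak_model" where
  "induced_ak M tp ta y0 =
     \<lparr> AkWA = UNIV, AkWK = ElW M, AkR = (\<lambda>y. {}), AkS = (\<lambda>i. ElR M i),
       AkVA = (\<lambda>p. {}), AkVK = (\<lambda>pk. ElV M (inv tp pk)),
       AkNomA = (\<lambda>a. inv ta a), AkNomK = (\<lambda>k. y0) \<rparr>"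

end

theory Submission
  imports Defs
begin

text \<open>The agent coordinate of the evaluation point is irrelevant for translated formulas:
  it is only consulted by \<open>\<box>\<^sub>K\<close>, and every \<open>\<box>\<^sub>K\<close> in \<open>T(\<phi>)\<close> sits directly under \<open>@\<^bsub>T(i)\<^esub>\<close>,
  which resets it to the agent \<open>i\<close> whose relation \<open>S\<^sub>i = R\<^sub>i\<close> then interprets \<open>K\<^sub>i\<close>.\<close>

lemma induced_ak_simps [simp]:
  "AkS (induced_ak M tp ta y0) i = ElR M i"
  "AkVK (induced_ak M tp ta y0) pk = ElV M (inv tp pk)"
  "AkNomA (induced_ak M tp ta y0) a = inv ta a"
  by (simp_all add: induced_ak_def)

lemma ak_sat_induced_transl_iff:
  assumes "inj tp" and "inj ta"
  shows "ak_sat (induced_ak M tp ta y0) i w (transl tp ta \<phi>) \<longleftrightarrow> el_sat M w \<phi>"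
  using assms by (induction \<phi> arbitrary: i w) simp_all

theorem mainTheorem3:
  fixes M :: "('w, 'i, 'p) el_model"
    and tp :: "'p \<Rightarrow> 'pk" and ta :: "'i \<Rightarrow> 'na" and y0 :: 'w
  assumes "el_model M"
    and "bij tp" and "bij ta"
    and "y0 \<in> ElW M"
    and "w \<in> ElW M"
  shows "el_sat M w \<phi> \<longleftrightarrow>
         ak_sat (induced_ak M tp ta y0 :: ('i, 'w, 'pa, 'pk, 'na, 'nk) ak_model) i w (transl tp ta \<phi>)"
  using \<open>bij tp\<close> \<open>bij ta\<close> by (simp add: ak_sat_induced_transl_iff bij_is_inj)

end
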